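(* Let $\mathcal F\subseteq 2^{[n]}$ be a simply rooted family of sets such that $\emptyset\in\mathcal F$, and let $A\in\mathcal F$ be non-empty. For $k\ge 0$ let $\mathcal C_k(\mathcal F,A)=\{[C,A]: C\subseteq A,\ [C,A]\subseteq\mathcal F,\ |A\setminus C|=k\}$. Then $$\sum_{k=0}^{|A|}(-1)^k|\mathcal C_k(\mathcal F,A)|=0.$$
   Context: $[n]=\{1,\dots,n\}$, $2^{[n]}$ its power set, $[C,D]=\{E\in 2^{[n]}: C\subseteq E\subseteq D\}$, $[i,A]=[\{i\},A]$. A family $\mathcal F\subseteq 2^{[n]}$ is simply rooted if for every non-empty $A\in\mathcal F$ there is $i\in A$ with $[i,A]\subseteq\mathcal F$. *)

theory Defs
  imports Main
begin

definition interval :: "nat set \<Rightarrow> nat set \<Rightarrow> nat set set" where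
  "interval C D = {E. C \<subseteq> E \<and> E \<subseteq> D}"

definition simply_rooted :: "nat set set \<Rightarrow> bool" where
  "simply_rooted F \<longleftrightarrow>
     (\<forall>A\<in>F. A \<noteq> {} \<longrightarrow> (\<exists>i\<in>A. interval {i} A \<subseteq> F))"

definition Cfam :: "nat \<Rightarrow> nat set set \<Rightarrow> nat set \<Rightarrow> nat set set set" where
  "Cfam k F A = {interval C A | C. C \<subseteq> A \<and> interval C A \<subseteq> F \<and> card (A - C) = k}"

end

theory Submission
  imports Defs
begin

text \<open>
  Write \<open>g(A)\<close> for the sum of \<open>(-1)^|C|\<close> over all \<open>C \<subseteq> A\<close> with \<open>[C,A] \<subseteq> F\<close>; up to the sign
  \<open>(-1)^|A|\<close> this is the alternating sum of the theorem. If \<open>i\<close> is a root of \<open>A\<close>, such a \<open>C\<close>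
  either contains \<open>i\<close>, and then every \<open>C \<supseteq> {i}\<close> qualifies, or it does not, and then it
  qualifies for \<open>A - {i}\<close> as well. The first kind contributes \<open>-[A = {i}]\<close>, so
  \<open>g(A) = g(A - {i}) - [A - {i} = {}]\<close>, and induction gives \<open>g(A) = [A = {}]\<close>.
\<close>

lemma sum_Pow_neg_one_power_card:
  assumes "finite B"
  shows "(\<Sum>C\<in>Pow B. (-1::'a::ring_1) ^ card C) = (if B = {} then 1 else 0)"
proof (cases "B = {}")
  case False
  then have "card {C. C \<subseteq> B \<and> {} \<subseteq> C \<and> even (card C)} = card {C. C \<subseteq> B \<and> {} \<subseteq> C \<and> odd (card C)}"
    using card_subsupersets_even_odd[OF assms] by blast
  then show ?thesis
    using False assms by (simp add: sum_alternating_cancels Pow_def)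
qed simp

lemma sum_insert_Pow_neg_one_power_card:
  assumes "finite B" "x \<notin> B"
  shows "(\<Sum>C\<in>insert x ` Pow B. (-1::'a::ring_1) ^ card C) = - (\<Sum>C\<in>Pow B. (-1) ^ card C)"
proof -
  have "inj_on (insert x) (Pow B)"
    using assms(2) by (auto simp: inj_on_def)
  then have "(\<Sum>C\<in>insert x ` Pow B. (-1::'a) ^ card C) = (\<Sum>C\<in>Pow B. (-1) ^ card (insert x C))"
    by (simp add: sum.reindex)
  also have "\<dots> = (\<Sum>C\<in>Pow B. - ((-1) ^ card C))"
  proof (rule sum.cong)
    fix C assume "C \<in> Pow B"
    then have "finite C" "x \<notin> C" using assms finite_subset by auto
    then show "(-1::'a) ^ card (insert x C) = - ((-1) ^ card C)" by simp
  qed simp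
  finally show ?thesis
    by (simp add: sum_negf)
qed

definition interval_bottoms :: "nat set set \<Rightarrow> nat set \<Rightarrow> nat set set" where
  "interval_bottoms F A = {C. C \<subseteq> A \<and> interval C A \<subseteq> F}"

lemma finite_interval_bottoms: "finite A \<Longrightarrow> finite (interval_bottoms F A)"
  unfolding interval_bottoms_def by (rule finite_subset[of _ "Pow A"]) auto

lemma interval_bottoms_empty: "{} \<in> F \<Longrightarrow> interval_bottoms F {} = {{}}"
  by (auto simp: interval_bottoms_def interval_def)

lemma interval_bottoms_eq_empty: "A \<notin> F \<Longrightarrow> interval_bottoms F A = {}"
  by (auto simp: interval_bottoms_def interval_def)

lemma interval_bottoms_root_split:
  assumes "i \<in> A" "interval {i} A \<subseteq> F"
  shows "interval_bottoms F A = insert i ` Pow (A - {i}) \<union> interval_bottoms F (A - {i})"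
proof
  show "interval_bottoms F A \<subseteq> insert i ` Pow (A - {i}) \<union> interval_bottoms F (A - {i})"
  proof
    fix C assume C: "C \<in> interval_bottoms F A"
    show "C \<in> insert i ` Pow (A - {i}) \<union> interval_bottoms F (A - {i})"
    proof (cases "i \<in> C")
      case True
      then have "C = insert i (C - {i})" by blast
      moreover have "C - {i} \<in> Pow (A - {i})"
        using C by (auto simp: interval_bottoms_def)
      ultimately show ?thesis by blast
    next
      case False
      then show ?thesis
        using C by (auto simp: interval_bottoms_def interval_def)
    qed
  qed
next
  have "interval C A \<subseteq> F" if "C \<subseteq> A - {i}" "interval C (A - {i}) \<subseteq> F" for C
  proof
    fix E assume "E \<in> interval C A"
    then have "E \<in> interval {i} A \<or> E \<in> interval C (A - {i})"
      by (auto simp: interval_def)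
    then show "E \<in> F" using assms(2) that(2) by blast
  qed
  then show "insert i ` Pow (A - {i}) \<union> interval_bottoms F (A - {i}) \<subseteq> interval_bottoms F A"
    using assms by (auto simp: interval_bottoms_def interval_def)
qed

lemma sum_interval_bottoms_remove_root:
  assumes "finite A" "i \<in> A" "interval {i} A \<subseteq> F"
  shows "(\<Sum>C\<in>interval_bottoms F A. (-1::int) ^ card C)
       = (\<Sum>C\<in>interval_bottoms F (A - {i}). (-1) ^ card C) - (if A - {i} = {} then 1 else 0)"
proof -
  have "insert i ` Pow (A - {i}) \<inter> interval_bottoms F (A - {i}) = {}"
    by (auto simp: interval_bottoms_def)
  then have "(\<Sum>C\<in>interval_bottoms F A. (-1::int) ^ card C)
      = (\<Sum>C\<in>insert i ` Pow (A - {i}). (-1) ^ card C) + (\<Sum>C\<in>interval_bottoms F (A - {i}). (-1) ^ card C)"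
    using assms by (simp add: interval_bottoms_root_split sum.union_disjoint finite_interval_bottoms)
  then show ?thesis
    using assms(1) by (simp add: sum_insert_Pow_neg_one_power_card sum_Pow_neg_one_power_card)
qed

lemma sum_interval_bottoms_simply_rooted:
  assumes "finite A" "simply_rooted F" "{} \<in> F"
  shows "(\<Sum>C\<in>interval_bottoms F A. (-1::int) ^ card C) = (if A = {} then 1 else 0)"
  using assms(1)
proof (induction A rule: finite_psubset_induct)
  case (psubset A)
  consider "A = {}" | "A \<noteq> {}" "A \<notin> F" | "A \<noteq> {}" "A \<in> F" by blast
  then show ?case
  proof cases
    case 3
    then obtain i where "i \<in> A" "interval {i} A \<subseteq> F"
      using assms(2) unfolding simply_rooted_def by blast
    moreover have "A - {i} \<subset> A" using \<open>i \<in> A\<close> by blast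
    ultimately show ?thesis
      using psubset by (simp add: sum_interval_bottoms_remove_root \<open>A \<noteq> {}\<close>)
  qed (simp_all add: interval_bottoms_empty interval_bottoms_eq_empty assms(3))
qed

lemma inj_on_interval_Pow: "inj_on (\<lambda>C. interval C A) (Pow A)"
proof (rule inj_onI)
  fix C D assume "C \<in> Pow A" "D \<in> Pow A" "interval C A = interval D A"
  then have "C \<in> interval D A" "D \<in> interval C A" by (auto simp: interval_def)
  then show "C = D" by (auto simp: interval_def)
qed

lemma card_Cfam: "card (Cfam k F A) = card {C \<in> interval_bottoms F A. card (A - C) = k}"
proof -
  have "Cfam k F A = (\<lambda>C. interval C A) ` {C \<in> interval_bottoms F A. card (A - C) = k}"
    by (auto simp: Cfam_def interval_bottoms_def)
  moreover have "inj_on (\<lambda>C. interval C A) {C \<in> interval_bottoms F A. card (A - C) = k}"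
    by (rule inj_on_subset[OF inj_on_interval_Pow]) (auto simp: interval_bottoms_def)
  ultimately show ?thesis by (simp add: card_image)
qed

lemma alternating_sum_card_Cfam:
  assumes "finite A"
  shows "(\<Sum>k = 0..card A. (-1::int) ^ k * int (card (Cfam k F A)))
       = (-1) ^ card A * (\<Sum>C\<in>interval_bottoms F A. (-1) ^ card C)"
proof -
  have "(\<Sum>k = 0..card A. (-1::int) ^ k * int (card (Cfam k F A)))
      = (\<Sum>k = 0..card A. \<Sum>C\<in>{C \<in> interval_bottoms F A. card (A - C) = k}. (-1) ^ card (A - C))"
    by (simp add: card_Cfam mult.commute)
  also have "\<dots> = (\<Sum>C\<in>interval_bottoms F A. (-1) ^ card (A - C))"
    using assms by (intro sum.group) (auto simp: finite_interval_bottoms card_mono)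
  also have "\<dots> = (\<Sum>C\<in>interval_bottoms F A. (-1) ^ card A * (-1) ^ card C)"
  proof (rule sum.cong)
    fix C assume "C \<in> interval_bottoms F A"
    then have "C \<subseteq> A" by (simp add: interval_bottoms_def)
    then have "card (A - C) = card A - card C" "card C \<le> card A"
      using assms by (auto simp: card_Diff_subset card_mono finite_subset)
    then show "(-1::int) ^ card (A - C) = (-1) ^ card A * (-1) ^ card C"
      by (simp add: neg_one_power_add_eq_neg_one_power_diff flip: power_add)
  qed simp
  finally show ?thesis
    by (simp add: sum_distrib_left)
qed

theorem lemma1:
  fixes n :: nat and F :: "nat set set" and A :: "nat set"
  assumes "F \<subseteq> Pow {1..n}"
    and "simply_rooted F"
    and "{} \<in> F"
    and "A \<in> F" and "A \<noteq> {}"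
  shows "(\<Sum>k = 0..card A. (-1::int) ^ k * int (card (Cfam k F A))) = 0"
proof -
  have "finite A"
    using assms(1,4) finite_subset[of A "{1..n}"] by auto
  then show ?thesis
    using assms(2,3,5) by (simp add: alternating_sum_card_Cfam sum_interval_bottoms_simply_rooted)
qed

end
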